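(* Let $H$ be a CQG Hopf $*$-algebra. The Yetter–Drinfeld modules $(H,\rhd,\Delta_H)$ and $(\mathcal{I},\bar\rhd,\delta_{\mathcal{I}})$ (described in the context) are isomorphic in ${}_H\mathrm{YD}^H$ if and only if $H$ is of Kac type, i.e. its invariant state $\Phi_H$ is tracial ($\Phi_H(hk)=\Phi_H(kh)$ for all $h,k\in H$).
   Context: A CQG Hopf $*$-algebra is a complex Hopf algebra $(H,\Delta_H,\varepsilon_H,S_H)$ with an anti-linear involution making it a $*$-algebra with $\Delta_H$ a $*$-homomorphism, admitting a state $\Phi_H$ with $(\Phi_H\otimes\mathrm{id})\Delta_H(h)=\Phi_H(h)1=(\mathrm{id}\otimes\Phi_H)\Delta_H(h)$; $S_H$ is invertible. Sweedler notation $\Delta_H(h)=h_{(1)}\otimes h_{(2)}$. ${}_H\mathrm{YD}^H$ is the category of left $H$-modules $V$ with right $H$-comodule structure $v\mapsto v_{(0)}\otimes v_{(1)}$ such that $(hv)_{(0)}\otimes(hv)_{(1)}=h_{(2)}v_{(0)}\otimes h_{(3)}v_{(1)}S_H^{-1}(h_{(1)})$; morphisms are module and comodule maps. $H$ is an object via $h\rhd k=h_{(2)}kS_H^{-1}(h_{(1)})$ and $\Delta_H$. The restricted dual $\mathcal{I}=\{\Phi_H(a\,-):a\in H\}$ of linear functionals on $H$ is an algebra under convolution $(\omega\chi)(h)=(\omega\otimes\chi)\Delta_H(h)$; it carries the unique right $H$-comodule structure $\delta_{\mathcal{I}}(\omega)=\omega_{(0)}\otimes\omega_{(1)}$ with $\chi\omega=\chi(\omega_{(1)})\omega_{(0)}$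 for all $\chi\in\mathcal{I}$, and the left $H$-action $(h\,\bar\rhd\,\omega)(k)=\omega(S_H^{-1}(h_{(2)})kh_{(1)})$; with these, $\mathcal{I}\in{}_H\mathrm{YD}^H$. *)

theory Defs
  imports Complex_Main
begin

text \<open>The Hopf algebra H is the carrier type 'h (a unital ring) together with a complex scalar
  multiplication sc.  Elements of a tensor product V (x) W are represented by finite lists of
  pairs (Sweedler sums); two such lists denote the same tensor iff they agree under every pair of
  linear functionals (linear functionals separate points of V (x) W over a field).\<close>

definition lin :: "(complex \<Rightarrow> 'v \<Rightarrow> 'v) \<Rightarrow> ('v::plus \<Rightarrow> complex) \<Rightarrow> bool" where
  "lin sc f \<longleftrightarrow> (\<forall>x y. f (x + y) = f x + f y) \<and> (\<forall>c x. f (sc c x) = c * f x)"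

definition lin_dual :: "(('h \<Rightarrow> complex) \<Rightarrow> complex) \<Rightarrow> bool" where
  "lin_dual F \<longleftrightarrow> (\<forall>\<omega> \<chi>. F (\<lambda>x. \<omega> x + \<chi> x) = F \<omega> + F \<chi>) \<and> (\<forall>c \<omega>. F (\<lambda>x. c * \<omega> x) = c * F \<omega>)"

definition ten2 :: "('a \<Rightarrow> complex) \<Rightarrow> ('b \<Rightarrow> complex) \<Rightarrow> ('a \<times> 'b) list \<Rightarrow> complex" where
  "ten2 f g t = sum_list (map (\<lambda>(a, b). f a * g b) t)"

definition teq :: "(complex \<Rightarrow> 'h \<Rightarrow> 'h) \<Rightarrow> ('h::plus \<times> 'h) list \<Rightarrow> ('h \<times> 'h) list \<Rightarrow> bool" where
  "teq sc t u \<longleftrightarrow> (\<forall>f g. lin sc f \<longrightarrow> lin sc g \<longrightarrow> ten2 f g t = ten2 f g u)"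

definition calg :: "(complex \<Rightarrow> 'h::ring_1 \<Rightarrow> 'h) \<Rightarrow> bool" where
  "calg sc \<longleftrightarrow> (\<forall>c x y. sc c (x + y) = sc c x + sc c y) \<and> (\<forall>c d x. sc (c + d) x = sc c x + sc d x)
     \<and> (\<forall>c d x. sc c (sc d x) = sc (c * d) x) \<and> (\<forall>x. sc 1 x = x)
     \<and> (\<forall>c x y. sc c (x * y) = sc c x * y) \<and> (\<forall>c x y. sc c (x * y) = x * sc c y)"

definition CQG_Hopf_star_algebra ::
  "(complex \<Rightarrow> 'h::ring_1 \<Rightarrow> 'h) \<Rightarrow> ('h \<Rightarrow> ('h \<times> 'h) list) \<Rightarrow> ('h \<Rightarrow> complex) \<Rightarrow> ('h \<Rightarrow> 'h)
    \<Rightarrow> ('h \<Rightarrow> 'h) \<Rightarrow> ('h \<Rightarrow> complex) \<Rightarrow> bool" where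
  "CQG_Hopf_star_algebra sc \<Delta> \<epsilon> S st \<Phi> \<longleftrightarrow>
     calg sc
     \<comment> \<open>comultiplication: linear, coassociative, unital and multiplicative\<close>
     \<and> (\<forall>h k. teq sc (\<Delta> (h + k)) (\<Delta> h @ \<Delta> k))
     \<and> (\<forall>c h. teq sc (\<Delta> (sc c h)) (map (\<lambda>(a, b). (sc c a, b)) (\<Delta> h)))
     \<and> (\<forall>h f g k. lin sc f \<longrightarrow> lin sc g \<longrightarrow> lin sc k \<longrightarrow>
          sum_list (map (\<lambda>(a, b). ten2 f g (\<Delta> a) * k b) (\<Delta> h))
          = sum_list (map (\<lambda>(a, b). f a * ten2 g k (\<Delta> b)) (\<Delta> h)))
     \<and> teq sc (\<Delta> 1) [(1, 1)]
     \<and> (\<forall>h k. teq sc (\<Delta> (h * k)) [(a * c, b * d). (a, b) \<leftarrow> \<Delta> h, (c, d) \<leftarrow> \<Delta> k])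
     \<comment> \<open>counit: linear, multiplicative, counital\<close>
     \<and> lin sc \<epsilon> \<and> \<epsilon> 1 = 1 \<and> (\<forall>h k. \<epsilon> (h * k) = \<epsilon> h * \<epsilon> k)
     \<and> (\<forall>h. sum_list (map (\<lambda>(a, b). sc (\<epsilon> a) b) (\<Delta> h)) = h)
     \<and> (\<forall>h. sum_list (map (\<lambda>(a, b). sc (\<epsilon> b) a) (\<Delta> h)) = h)
     \<comment> \<open>antipode: linear, antipode identities, invertible\<close>
     \<and> (\<forall>h k. S (h + k) = S h + S k) \<and> (\<forall>c h. S (sc c h) = sc c (S h))
     \<and> (\<forall>h. sum_list (map (\<lambda>(a, b). S a * b) (\<Delta> h)) = sc (\<epsilon> h) 1)
     \<and> (\<forall>h. sum_list (map (\<lambda>(a, b). a * S b) (\<Delta> h)) = sc (\<epsilon> h) 1)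
     \<and> bij S
     \<comment> \<open>star: anti-linear, anti-multiplicative involution; comultiplication is a star-map\<close>
     \<and> (\<forall>h k. st (h + k) = st h + st k) \<and> (\<forall>c h. st (sc c h) = sc (cnj c) (st h))
     \<and> (\<forall>h k. st (h * k) = st k * st h) \<and> (\<forall>h. st (st h) = h)
     \<and> (\<forall>h. teq sc (\<Delta> (st h)) (map (\<lambda>(a, b). (st a, st b)) (\<Delta> h)))
     \<comment> \<open>Phi is a state (positive normalised linear functional) which is bi-invariant\<close>
     \<and> lin sc \<Phi> \<and> \<Phi> 1 = 1
     \<and> (\<forall>h. Im (\<Phi> (st h * h)) = 0 \<and> Re (\<Phi> (st h * h)) \<ge> 0)
     \<and> (\<forall>h. sum_list (map (\<lambda>(a, b). sc (\<Phi> a) b) (\<Delta> h)) = sc (\<Phi> h) 1)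
     \<and> (\<forall>h. sum_list (map (\<lambda>(a, b). sc (\<Phi> b) a) (\<Delta> h)) = sc (\<Phi> h) 1)"

definition dual_I :: "('h::times \<Rightarrow> complex) \<Rightarrow> ('h \<Rightarrow> complex) set" where
  "dual_I \<Phi> = {(\<lambda>h. \<Phi> (a * h)) | a. True}"

definition conv :: "('h \<Rightarrow> ('h \<times> 'h) list) \<Rightarrow> ('h \<Rightarrow> complex) \<Rightarrow> ('h \<Rightarrow> complex) \<Rightarrow> 'h \<Rightarrow> complex" where
  "conv \<Delta> \<omega> \<chi> h = sum_list (map (\<lambda>(a, b). \<omega> a * \<chi> b) (\<Delta> h))"

text \<open>delta is (a Sweedler representation of) the right H-comodule structure on I characterised by
  chi omega = chi(omega_(1)) omega_(0) for all chi in I, with omega_(0) in I.\<close>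
definition dual_coaction ::
  "('h \<Rightarrow> ('h \<times> 'h) list) \<Rightarrow> ('h::times \<Rightarrow> complex)
    \<Rightarrow> (('h \<Rightarrow> complex) \<Rightarrow> (('h \<Rightarrow> complex) \<times> 'h) list) \<Rightarrow> bool" where
  "dual_coaction \<Delta> \<Phi> \<delta> \<longleftrightarrow>
     (\<forall>\<omega> \<in> dual_I \<Phi>. fst ` set (\<delta> \<omega>) \<subseteq> dual_I \<Phi>
        \<and> (\<forall>\<chi> \<in> dual_I \<Phi>. \<forall>h. conv \<Delta> \<chi> \<omega> h = sum_list (map (\<lambda>(\<omega>', k). \<chi> k * \<omega>' h) (\<delta> \<omega>))))"

definition act_H :: "('h \<Rightarrow> ('h \<times> 'h) list) \<Rightarrow> ('h::{times,monoid_add} \<Rightarrow> 'h) \<Rightarrow> 'h \<Rightarrow> 'h \<Rightarrow> 'h" where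
  "act_H \<Delta> S h k = sum_list (map (\<lambda>(a, b). b * k * inv S a) (\<Delta> h))"

definition act_I :: "('h \<Rightarrow> ('h \<times> 'h) list) \<Rightarrow> ('h::times \<Rightarrow> 'h) \<Rightarrow> 'h \<Rightarrow> ('h \<Rightarrow> complex) \<Rightarrow> 'h \<Rightarrow> complex" where
  "act_I \<Delta> S h \<omega> k = sum_list (map (\<lambda>(a, b). \<omega> (inv S b * k * a)) (\<Delta> h))"

definition YD_isomorphic ::
  "(complex \<Rightarrow> 'h::ring_1 \<Rightarrow> 'h) \<Rightarrow> ('h \<Rightarrow> ('h \<times> 'h) list) \<Rightarrow> ('h \<Rightarrow> 'h) \<Rightarrow> ('h \<Rightarrow> complex)
    \<Rightarrow> (('h \<Rightarrow> complex) \<Rightarrow> (('h \<Rightarrow> complex) \<times> 'h) list) \<Rightarrow> bool" where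
  "YD_isomorphic sc \<Delta> S \<Phi> \<delta> \<longleftrightarrow>
     (\<exists>\<phi> :: 'h \<Rightarrow> ('h \<Rightarrow> complex).
        (\<forall>h k. \<phi> (h + k) = (\<lambda>x. \<phi> h x + \<phi> k x))
      \<and> (\<forall>c h. \<phi> (sc c h) = (\<lambda>x. c * \<phi> h x))
      \<and> bij_betw \<phi> UNIV (dual_I \<Phi>)
      \<and> (\<forall>h k. \<phi> (act_H \<Delta> S h k) = act_I \<Delta> S h (\<phi> k))
      \<and> (\<forall>h F g. lin_dual F \<longrightarrow> lin sc g \<longrightarrow>
           ten2 F g (\<delta> (\<phi> h)) = ten2 (\<lambda>a. F (\<phi> a)) g (\<Delta> h)))"

definition Kac_type :: "('h::times \<Rightarrow> complex) \<Rightarrow> bool" where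
  "Kac_type \<Phi> \<longleftrightarrow> (\<forall>h k. \<Phi> (h * k) = \<Phi> (k * h))"

end

theory Submission
  imports Defs
begin

(* If \<Phi> is tracial, then S\<^sup>2 = id and a \<mapsto> \<Phi>(- S a) is a linear bijection H \<rightarrow> I; the
   strong invariance of \<Phi> (left and right invariance transported along \<Delta>) shows that it
   intertwines the adjoint action with the action on I, and \<Delta> with the coaction of I.

   Conversely, an isomorphism \<phi> sends 1 to some \<Phi>(c -).  As \<Delta> 1 = 1 \<otimes> 1, compatibility with
   the coactions makes \<phi> 1 a fixed point of left convolution by \<Phi>, so \<phi> 1 = \<Phi>(c) \<Phi> with
   \<Phi>(c) \<noteq> 0; since 1 is invariant under the adjoint action, \<Phi> is invariant under the action
   on I.  This invariance yields the modular identity \<Phi>(x a) = \<Phi>(S\<^sup>-\<^sup>2(a) x).  Together with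
   the nondegeneracy of \<Phi> it gives S\<^sup>4 = id, positivity excludes the eigenvalue -1 of S\<^sup>2,
   and then \<Phi>(x a) = \<Phi>(a x). *)

lemma affine_nonneg_imp_slope_zero:
  fixes p q :: real
  assumes "\<And>s. p + s * q \<ge> 0"
  shows "q = 0"
proof (rule ccontr)
  assume "q \<noteq> 0"
  then have "p + (- (\<bar>p\<bar> + 1) / q) * q = p - (\<bar>p\<bar> + 1)" by simp
  with assms[of "- (\<bar>p\<bar> + 1) / q"] show False by linarith
qed

lemma complex_affine_nonneg_imp_zero:
  fixes P A B :: complex
  assumes nonneg: "\<And>t. Im (P + t * A + cnj t * B) = 0 \<and> Re (P + t * A + cnj t * B) \<ge> 0"
  shows "A = 0"
proof -
  have P: "Im P = 0" "Re P \<ge> 0"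
    using nonneg[of 0] by auto
  have "Im (A + B) = 0"
    using nonneg[of 1] P by simp
  moreover have "Re (A + B) = 0"
  proof (rule affine_nonneg_imp_slope_zero)
    show "Re P + s * Re (A + B) \<ge> 0" for s
      using nonneg[of "complex_of_real s"] by (simp add: distrib_left)
  qed
  moreover have "Re (A - B) = 0"
    using nonneg[of \<i>] P by simp
  moreover have "- Im (A - B) = 0"
  proof (rule affine_nonneg_imp_slope_zero)
    show "Re P + s * - Im (A - B) \<ge> 0" for s
      using nonneg[of "\<i> * complex_of_real s"] by (simp add: algebra_simps)
  qed
  ultimately have "A + B = 0" "A - B = 0"
    by (simp_all add: complex_eq_iff)
  moreover have "2 * A = (A + B) + (A - B)"
    by simp
  ultimately show ?thesis
    by simp
qed

section \<open>Sweedler sums\<close>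

definition sw_sum :: "('a \<times> 'b) list \<Rightarrow> ('a \<Rightarrow> 'b \<Rightarrow> 'c::comm_monoid_add) \<Rightarrow> 'c" where
  "sw_sum t f = sum_list (map (\<lambda>(a, b). f a b) t)"

lemma sum_list_eq_sw_sum: "sum_list (map (\<lambda>(a, b). f a b) t) = sw_sum t f"
  by (simp add: sw_sum_def)

lemma ten2_eq_sw_sum: "ten2 f g t = sw_sum t (\<lambda>a b. f a * g b)"
  by (simp add: ten2_def sw_sum_def)

lemma sw_sum_Nil [simp]: "sw_sum [] f = 0"
  by (simp add: sw_sum_def)

lemma sw_sum_Cons [simp]: "sw_sum (p # t) f = f (fst p) (snd p) + sw_sum t f"
  by (simp add: sw_sum_def split_beta)

lemma sw_sum_append [simp]: "sw_sum (t @ u) f = sw_sum t f + sw_sum u f"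
  by (simp add: sw_sum_def)

lemma sw_sum_zero [simp]: "sw_sum t (\<lambda>a b. 0) = 0"
  by (induct t) auto

lemma sw_sum_add: "sw_sum t (\<lambda>a b. f a b + g a b) = sw_sum t f + sw_sum t g"
  by (induct t) (auto simp: algebra_simps)

lemma sw_sum_diff: "sw_sum t (\<lambda>a b. f a b - (g a b :: 'c::ab_group_add)) = sw_sum t f - sw_sum t g"
  by (induct t) (auto simp: algebra_simps)

lemma sw_sum_cong: "(\<And>a b. (a, b) \<in> set t \<Longrightarrow> f a b = g a b) \<Longrightarrow> sw_sum t f = sw_sum t g"
  unfolding sw_sum_def by (intro arg_cong[where f = sum_list] map_cong) auto

lemma sw_sum_mult_left: "(x :: 'c::semiring_0) * sw_sum t f = sw_sum t (\<lambda>a b. x * f a b)"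
  by (induct t) (auto simp: algebra_simps)

lemma sw_sum_mult_right: "sw_sum t f * (x :: 'c::semiring_0) = sw_sum t (\<lambda>a b. f a b * x)"
  by (induct t) (auto simp: algebra_simps)

lemma sw_sum_hom:
  "(\<And>x y. g (x + y) = g x + g y) \<Longrightarrow> g 0 = 0 \<Longrightarrow> g (sw_sum t f) = sw_sum t (\<lambda>a b. g (f a b))"
  by (induct t) auto

lemma sw_sum_swap:
  "sw_sum t (\<lambda>a b. sw_sum u (\<lambda>c d. f a b c d)) = sw_sum u (\<lambda>c d. sw_sum t (\<lambda>a b. f a b c d))"
  by (induct t) (auto simp: sw_sum_add)

lemma sw_sum_sum: "sw_sum t (\<lambda>a b. \<Sum>e\<in>E. f e a b) = (\<Sum>e\<in>E. sw_sum t (f e))"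
  by (induct t) (auto simp: sum.distrib)

lemma sw_sum_map: "sw_sum (map (\<lambda>(a, b). (p a b, q a b)) t) f = sw_sum t (\<lambda>a b. f (p a b) (q a b))"
  by (induct t) (auto simp: split_beta)

lemma sw_sum_concat_map:
  "sw_sum [(a * c, b * d). (a, b) \<leftarrow> t, (c, d) \<leftarrow> u] f
   = sw_sum t (\<lambda>a b. sw_sum u (\<lambda>c d. f (a * c) (b * d)))"
proof (induct t)
  case (Cons p t)
  then show ?case by (cases p) (simp add: sw_sum_map)
qed simp

lemma lin_dual_sw_sum:
  assumes "lin_dual F"
  shows "F (\<lambda>y. sw_sum t (\<lambda>a b. k a b * f a b y)) = sw_sum t (\<lambda>a b. k a b * F (f a b))"
proof (induct t)
  case Nil
  have "F (\<lambda>y. 0 * f0 y) = 0 * F f0" for f0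
    using assms unfolding lin_dual_def by blast
  then show ?case
    by simp
next
  case (Cons p t)
  then show ?case
    using assms by (simp add: lin_dual_def)
qed

section \<open>Coordinates in a complex vector space\<close>

text \<open>Equality of tensors (\<open>teq\<close>) is only tested on products of two linear functionals.
  Expanding in the coordinates of a Hamel basis extends such identities to all bilinear maps,
  and coassociativity to all trilinear maps.\<close>

locale complex_space = V: vector_space sc for sc :: "complex \<Rightarrow> 'v::ab_group_add \<Rightarrow> 'v"
begin

definition some_basis :: "'v set" where
  "some_basis = (SOME B. V.independent B \<and> V.span B = UNIV)"

lemma some_basis: "V.independent some_basis" "V.span some_basis = UNIV"
proof -
  obtain B where "V.independent B" "UNIV \<subseteq> V.span B"
    using V.basis_exists[of UNIV] by blast
  then have "\<exists>B. V.independent B \<and> V.span B = UNIV" by blast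
  then show "V.independent some_basis" "V.span some_basis = UNIV"
    unfolding some_basis_def by (metis (mono_tags, lifting) someI_ex)+
qed

definition coord :: "'v \<Rightarrow> 'v \<Rightarrow> complex" where
  "coord e x = V.representation some_basis x e"

definition coord_supp :: "'v \<Rightarrow> 'v set" where
  "coord_supp x = {e. coord e x \<noteq> 0}"

definition list_coord_supp :: "('v \<times> 'v) list \<Rightarrow> 'v set" where
  "list_coord_supp t = (\<Union>p\<in>set t. coord_supp (fst p) \<union> coord_supp (snd p))"

lemma coord_add [simp]: "coord e (x + y) = coord e x + coord e y"
  using some_basis by (simp add: coord_def V.representation_add)

lemma coord_scale [simp]: "coord e (sc c x) = c * coord e x"
  using some_basis by (simp add: coord_def V.representation_scale)

lemma lin_coord: "lin sc (coord e)"
  by (simp add: lin_def)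

lemma finite_coord_supp: "finite (coord_supp x)"
  by (simp add: coord_supp_def coord_def V.finite_representation)

lemma finite_list_coord_supp: "finite (list_coord_supp t)"
  by (auto simp: list_coord_supp_def finite_coord_supp)

lemma coord_supp_subset_list_coord_supp:
  assumes "(a, b) \<in> set t"
  shows "coord_supp a \<subseteq> list_coord_supp t" "coord_supp b \<subseteq> list_coord_supp t"
  using assms by (force simp: list_coord_supp_def)+

lemma sum_coord_scale:
  assumes "finite E" "coord_supp x \<subseteq> E"
  shows "(\<Sum>e\<in>E. sc (coord e x) e) = x"
proof -
  have "(\<Sum>e\<in>E. sc (coord e x) e) = (\<Sum>e\<in>coord_supp x. sc (coord e x) e)"
    by (rule sum.mono_neutral_right) (use assms in \<open>auto simp: coord_supp_def\<close>)
  also have "\<dots> = x"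
    using some_basis V.sum_nonzero_representation_eq[of some_basis x]
    by (simp add: coord_def coord_supp_def)
  finally show ?thesis .
qed

lemma eq_if_coord_eq:
  assumes "\<And>e. coord e x = coord e y"
  shows "x = y"
  using sum_coord_scale[OF finite_coord_supp order_refl, of x]
    sum_coord_scale[OF finite_coord_supp order_refl, of y]
  by (simp add: assms coord_supp_def)

lemma eq_if_lin_eq: "(\<And>f. lin sc f \<Longrightarrow> f x = f y) \<Longrightarrow> x = y"
  using eq_if_coord_eq lin_coord by blast

lemma lin_zero: "lin sc f \<Longrightarrow> f 0 = 0"
  unfolding lin_def by (metis mult_zero_left V.scale_zero_left)

lemma lin_diff: "lin sc f \<Longrightarrow> f (x - y) = f x - f y"
  unfolding lin_def by (metis add_diff_cancel diff_add_cancel eq_diff_eq)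

lemma lin_sw_sum: "lin sc f \<Longrightarrow> f (sw_sum t g) = sw_sum t (\<lambda>a b. f (g a b))"
  by (rule sw_sum_hom) (auto simp: lin_def lin_zero)

lemma lin_sum_coord:
  assumes "lin sc f" "finite E" "coord_supp x \<subseteq> E"
  shows "f x = (\<Sum>e\<in>E. coord e x * f e)"
proof -
  have "f x = f (\<Sum>e\<in>E. sc (coord e x) e)"
    using sum_coord_scale[OF assms(2,3)] by simp
  also have "\<dots> = (\<Sum>e\<in>E. f (sc (coord e x) e))"
    by (rule sum_comp_morphism[symmetric, unfolded comp_def])
      (use assms(1) lin_zero in \<open>auto simp: lin_def\<close>)
  finally show ?thesis
    using assms(1) by (simp add: lin_def)
qed

definition linear_map :: "('v \<Rightarrow> 'v) \<Rightarrow> bool" where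
  "linear_map g \<longleftrightarrow> (\<forall>x y. g (x + y) = g x + g y) \<and> (\<forall>c x. g (sc c x) = sc c (g x))"

definition bilinear_fun :: "('v \<Rightarrow> 'v \<Rightarrow> complex) \<Rightarrow> bool" where
  "bilinear_fun \<beta> \<longleftrightarrow> (\<forall>y. lin sc (\<lambda>x. \<beta> x y)) \<and> (\<forall>x. lin sc (\<beta> x))"

definition trilinear_fun :: "('v \<Rightarrow> 'v \<Rightarrow> 'v \<Rightarrow> complex) \<Rightarrow> bool" where
  "trilinear_fun \<gamma> \<longleftrightarrow>
     (\<forall>y z. lin sc (\<lambda>x. \<gamma> x y z)) \<and> (\<forall>x z. lin sc (\<lambda>y. \<gamma> x y z)) \<and> (\<forall>x y. lin sc (\<gamma> x y))"

definition bilinear_map :: "('v \<Rightarrow> 'v \<Rightarrow> 'v) \<Rightarrow> bool" where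
  "bilinear_map \<beta> \<longleftrightarrow> (\<forall>y. linear_map (\<lambda>x. \<beta> x y)) \<and> (\<forall>x. linear_map (\<beta> x))"

definition trilinear_map :: "('v \<Rightarrow> 'v \<Rightarrow> 'v \<Rightarrow> 'v) \<Rightarrow> bool" where
  "trilinear_map \<gamma> \<longleftrightarrow>
     (\<forall>y z. linear_map (\<lambda>x. \<gamma> x y z)) \<and> (\<forall>x z. linear_map (\<lambda>y. \<gamma> x y z))
     \<and> (\<forall>x y. linear_map (\<gamma> x y))"

lemma lin_coord_linear_map: "linear_map g \<Longrightarrow> lin sc (\<lambda>x. coord e (g x))"
  by (simp add: linear_map_def lin_def)

lemma bilinear_fun_coord: "bilinear_map \<beta> \<Longrightarrow> bilinear_fun (\<lambda>x y. coord e (\<beta> x y))"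
  by (simp add: bilinear_map_def bilinear_fun_def lin_coord_linear_map)

lemma trilinear_fun_coord: "trilinear_map \<gamma> \<Longrightarrow> trilinear_fun (\<lambda>x y z. coord e (\<gamma> x y z))"
  by (simp add: trilinear_map_def trilinear_fun_def lin_coord_linear_map)

lemma linear_map_zero: "linear_map g \<Longrightarrow> g 0 = 0"
  unfolding linear_map_def by (metis V.scale_zero_left)

lemma linear_map_sw_sum_scale:
  assumes "linear_map g"
  shows "g (sw_sum t (\<lambda>a b. sc (k a b) (f a b))) = sw_sum t (\<lambda>a b. sc (k a b) (g (f a b)))"
proof -
  have "g (sw_sum t (\<lambda>a b. sc (k a b) (f a b))) = sw_sum t (\<lambda>a b. g (sc (k a b) (f a b)))"
    by (rule sw_sum_hom) (use assms linear_map_zero in \<open>auto simp: linear_map_def\<close>)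
  then show ?thesis
    using assms by (simp add: linear_map_def)
qed

lemma linear_map_sum_coord:
  assumes "linear_map g" "finite E" "coord_supp x \<subseteq> E"
  shows "g x = (\<Sum>e\<in>E. sc (coord e x) (g e))"
proof -
  have "g x = g (\<Sum>e\<in>E. sc (coord e x) e)"
    using sum_coord_scale[OF assms(2,3)] by simp
  also have "\<dots> = (\<Sum>e\<in>E. g (sc (coord e x) e))"
    by (rule sum_comp_morphism[symmetric, unfolded comp_def])
      (use assms(1) linear_map_zero in \<open>auto simp: linear_map_def\<close>)
  finally show ?thesis
    using assms(1) by (simp add: linear_map_def)
qed

lemma bilinear_fun_sum_coord:
  assumes "bilinear_fun \<beta>" "finite E" "coord_supp x \<subseteq> E" "coord_supp y \<subseteq> E"
  shows "\<beta> x y = (\<Sum>e1\<in>E. \<Sum>e2\<in>E. (coord e1 x * coord e2 y) * \<beta> e1 e2)"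
proof -
  have "\<beta> x y = (\<Sum>e1\<in>E. coord e1 x * \<beta> e1 y)"
    using lin_sum_coord[of "\<lambda>x. \<beta> x y"] assms by (simp add: bilinear_fun_def)
  also have "\<dots> = (\<Sum>e1\<in>E. coord e1 x * (\<Sum>e2\<in>E. coord e2 y * \<beta> e1 e2))"
    using lin_sum_coord[of "\<beta> _" E y] assms by (simp add: bilinear_fun_def)
  finally show ?thesis
    by (simp add: sum_distrib_left mult.assoc)
qed

lemma trilinear_fun_sum_coord:
  assumes "trilinear_fun \<gamma>" "finite E" "coord_supp x \<subseteq> E" "coord_supp y \<subseteq> E" "coord_supp z \<subseteq> E"
  shows "\<gamma> x y z
    = (\<Sum>e1\<in>E. \<Sum>e2\<in>E. \<Sum>e3\<in>E. (coord e1 x * coord e2 y * coord e3 z) * \<gamma> e1 e2 e3)"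
proof -
  have "\<gamma> x y z = (\<Sum>e1\<in>E. coord e1 x * \<gamma> e1 y z)"
    using lin_sum_coord[of "\<lambda>x. \<gamma> x y z"] assms by (simp add: trilinear_fun_def)
  also have "\<dots> = (\<Sum>e1\<in>E. coord e1 x * (\<Sum>e2\<in>E. coord e2 y * \<gamma> e1 e2 z))"
    using lin_sum_coord[of "\<lambda>y. \<gamma> _ y z" E y] assms by (simp add: trilinear_fun_def)
  also have "\<dots> = (\<Sum>e1\<in>E. coord e1 x * (\<Sum>e2\<in>E. coord e2 y * (\<Sum>e3\<in>E. coord e3 z * \<gamma> e1 e2 e3)))"
    using lin_sum_coord[of "\<gamma> _ _" E z] assms by (simp add: trilinear_fun_def)
  finally show ?thesis
    by (simp add: sum_distrib_left mult.assoc)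
qed

lemma sw_sum_teq_bilinear_fun:
  assumes "teq sc t u" "bilinear_fun \<beta>"
  shows "sw_sum t \<beta> = sw_sum u \<beta>"
proof -
  define E where "E = list_coord_supp (t @ u)"
  have "sw_sum v \<beta> = (\<Sum>e1\<in>E. \<Sum>e2\<in>E. sw_sum v (\<lambda>a b. coord e1 a * coord e2 b) * \<beta> e1 e2)"
    if "set v \<subseteq> set (t @ u)" for v
  proof -
    have "coord_supp a \<subseteq> E \<and> coord_supp b \<subseteq> E" if "(a, b) \<in> set v" for a b
      using that \<open>set v \<subseteq> set (t @ u)\<close> coord_supp_subset_list_coord_supp
      unfolding E_def by blast
    then have "sw_sum v \<beta> = sw_sum v (\<lambda>a b. \<Sum>e1\<in>E. \<Sum>e2\<in>E. (coord e1 a * coord e2 b) * \<beta> e1 e2)"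
      by (intro sw_sum_cong bilinear_fun_sum_coord[OF assms(2)])
        (auto simp: E_def finite_list_coord_supp)
    then show ?thesis
      by (simp add: sw_sum_sum sw_sum_mult_right)
  qed
  moreover have "sw_sum t (\<lambda>a b. coord e1 a * coord e2 b) = sw_sum u (\<lambda>a b. coord e1 a * coord e2 b)"
    for e1 e2
    using assms(1) lin_coord unfolding teq_def ten2_eq_sw_sum by blast
  ultimately show ?thesis
    by simp
qed

lemma sw_sum_teq_bilinear_map:
  assumes "teq sc t u" "bilinear_map \<beta>"
  shows "sw_sum t \<beta> = sw_sum u \<beta>"
proof (rule eq_if_coord_eq)
  fix e
  show "coord e (sw_sum t \<beta>) = coord e (sw_sum u \<beta>)"
    using sw_sum_teq_bilinear_fun[OF assms(1) bilinear_fun_coord[OF assms(2)]]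
    by (simp add: lin_sw_sum[OF lin_coord])
qed

lemma sw_sum_bilinear_map_fst:
  assumes "bilinear_map G"
  shows "sw_sum t G = (\<Sum>e\<in>list_coord_supp t. G e (sw_sum t (\<lambda>a b. sc (coord e a) b)))"
proof -
  have "sw_sum t G = sw_sum t (\<lambda>a b. \<Sum>e\<in>list_coord_supp t. sc (coord e a) (G e b))"
    using assms unfolding bilinear_map_def
    by (intro sw_sum_cong linear_map_sum_coord)
      (auto simp: finite_list_coord_supp dest: coord_supp_subset_list_coord_supp)
  also have "\<dots> = (\<Sum>e\<in>list_coord_supp t. sw_sum t (\<lambda>a b. sc (coord e a) (G e b)))"
    by (rule sw_sum_sum)
  also have "\<dots> = (\<Sum>e\<in>list_coord_supp t. G e (sw_sum t (\<lambda>a b. sc (coord e a) b)))"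
    using assms linear_map_sw_sum_scale[of "G _" t "\<lambda>a b. coord _ a" "\<lambda>a b. b"]
    by (simp add: bilinear_map_def)
  finally show ?thesis .
qed

lemma sw_sum_bilinear_map_snd:
  assumes "bilinear_map G"
  shows "sw_sum t G = (\<Sum>e\<in>list_coord_supp t. G (sw_sum t (\<lambda>a b. sc (coord e b) a)) e)"
proof -
  have "sw_sum t G = sw_sum t (\<lambda>a b. \<Sum>e\<in>list_coord_supp t. sc (coord e b) (G a e))"
    using assms unfolding bilinear_map_def
    by (intro sw_sum_cong linear_map_sum_coord)
      (auto simp: finite_list_coord_supp dest: coord_supp_subset_list_coord_supp)
  also have "\<dots> = (\<Sum>e\<in>list_coord_supp t. sw_sum t (\<lambda>a b. sc (coord e b) (G a e)))"
    by (rule sw_sum_sum)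
  also have "\<dots> = (\<Sum>e\<in>list_coord_supp t. G (sw_sum t (\<lambda>a b. sc (coord e b) a)) e)"
    using assms linear_map_sw_sum_scale[of "\<lambda>x. G x _" t "\<lambda>a b. coord _ b" "\<lambda>a b. a"]
    by (simp add: bilinear_map_def)
  finally show ?thesis .
qed

end

section \<open>CQG Hopf \<open>*\<close>-algebras\<close>

locale cqg_hopf =
  fixes sc :: "complex \<Rightarrow> 'h::ring_1 \<Rightarrow> 'h"
    and \<Delta> :: "'h \<Rightarrow> ('h \<times> 'h) list"
    and \<epsilon> :: "'h \<Rightarrow> complex"
    and S st :: "'h \<Rightarrow> 'h"
    and \<Phi> :: "'h \<Rightarrow> complex"
  assumes cqg: "CQG_Hopf_star_algebra sc \<Delta> \<epsilon> S st \<Phi>"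
begin

lemma sc_add_right: "sc c (x + y) = sc c x + sc c y"
  and sc_add_left: "sc (c + d) x = sc c x + sc d x"
  and sc_sc [simp]: "sc c (sc d x) = sc (c * d) x"
  and sc_one [simp]: "sc 1 x = x"
  and sc_mult_left [simp]: "sc c x * y = sc c (x * y)"
  and sc_mult_right [simp]: "x * sc c y = sc c (x * y)"
  using cqg unfolding CQG_Hopf_star_algebra_def calg_def by metis+

sublocale complex_space sc
  by unfold_locales (auto simp: sc_add_right sc_add_left)

lemma sc_zero_fun [simp]: "sc 0 = (\<lambda>x. 0)"
  by (rule ext) simp

lemma teq_Delta_add: "teq sc (\<Delta> (h + k)) (\<Delta> h @ \<Delta> k)"
  and teq_Delta_scale: "teq sc (\<Delta> (sc c h)) (map (\<lambda>(a, b). (sc c a, b)) (\<Delta> h))"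
  and teq_Delta_one: "teq sc (\<Delta> 1) [(1, 1)]"
  and teq_Delta_mult: "teq sc (\<Delta> (h * k)) [(a * c, b * d). (a, b) \<leftarrow> \<Delta> h, (c, d) \<leftarrow> \<Delta> k]"
  using cqg unfolding CQG_Hopf_star_algebra_def by auto

lemma coassoc_lin:
  "lin sc f \<Longrightarrow> lin sc g \<Longrightarrow> lin sc k \<Longrightarrow>
   sw_sum (\<Delta> h) (\<lambda>a b. sw_sum (\<Delta> a) (\<lambda>c d. f c * g d) * k b)
   = sw_sum (\<Delta> h) (\<lambda>a b. f a * sw_sum (\<Delta> b) (\<lambda>c d. g c * k d))"
  using cqg unfolding CQG_Hopf_star_algebra_def by (simp add: sw_sum_def ten2_def)

lemma counit_left: "sw_sum (\<Delta> h) (\<lambda>a b. sc (\<epsilon> a) b) = h"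
  and counit_right: "sw_sum (\<Delta> h) (\<lambda>a b. sc (\<epsilon> b) a) = h"
  and antipode_left: "sw_sum (\<Delta> h) (\<lambda>a b. S a * b) = sc (\<epsilon> h) 1"
  and antipode_right: "sw_sum (\<Delta> h) (\<lambda>a b. a * S b) = sc (\<epsilon> h) 1"
  and Phi_left_invariant: "sw_sum (\<Delta> h) (\<lambda>a b. sc (\<Phi> a) b) = sc (\<Phi> h) 1"
  and Phi_right_invariant: "sw_sum (\<Delta> h) (\<lambda>a b. sc (\<Phi> b) a) = sc (\<Phi> h) 1"
  using cqg unfolding CQG_Hopf_star_algebra_def sw_sum_def by auto

lemma lin_eps: "lin sc \<epsilon>"
  and eps_one [simp]: "\<epsilon> 1 = 1"
  and eps_mult [simp]: "\<epsilon> (h * k) = \<epsilon> h * \<epsilon> k"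
  and S_add [simp]: "S (h + k) = S h + S k"
  and S_scale [simp]: "S (sc c h) = sc c (S h)"
  and bij_S: "bij S"
  and st_add [simp]: "st (h + k) = st h + st k"
  and st_scale [simp]: "st (sc c h) = sc (cnj c) (st h)"
  and st_st [simp]: "st (st h) = h"
  and lin_Phi: "lin sc \<Phi>"
  and Phi_one [simp]: "\<Phi> 1 = 1"
  and Phi_positive: "Im (\<Phi> (st h * h)) = 0 \<and> Re (\<Phi> (st h * h)) \<ge> 0"
  using cqg unfolding CQG_Hopf_star_algebra_def by auto

lemma Phi_add [simp]: "\<Phi> (x + y) = \<Phi> x + \<Phi> y"
  and Phi_scale [simp]: "\<Phi> (sc c x) = c * \<Phi> x"
  and Phi_zero [simp]: "\<Phi> 0 = 0"
  and Phi_diff [simp]: "\<Phi> (x - y) = \<Phi> x - \<Phi> y"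
  and Phi_uminus [simp]: "\<Phi> (- x) = - \<Phi> x"
  and Phi_sw_sum [simp]: "\<Phi> (sw_sum t g) = sw_sum t (\<lambda>a b. \<Phi> (g a b))"
  using lin_Phi lin_diff[OF lin_Phi, of 0 x]
  by (simp_all add: lin_def lin_zero lin_diff lin_sw_sum)

lemma eps_add [simp]: "\<epsilon> (x + y) = \<epsilon> x + \<epsilon> y"
  and eps_scale [simp]: "\<epsilon> (sc c x) = c * \<epsilon> x"
  and eps_zero [simp]: "\<epsilon> 0 = 0"
  and eps_sw_sum [simp]: "\<epsilon> (sw_sum t g) = sw_sum t (\<lambda>a b. \<epsilon> (g a b))"
  using lin_eps by (simp_all add: lin_def lin_zero lin_diff lin_sw_sum)

lemma S_zero [simp]: "S 0 = 0"
  by (metis S_scale V.scale_zero_left)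

lemma S_diff [simp]: "S (x - y) = S x - S y"
  by (metis S_add diff_add_cancel eq_diff_eq)

lemma S_uminus [simp]: "S (- x) = - S x"
  using S_diff[of 0 x] by simp

lemma S_sw_sum [simp]: "S (sw_sum t g) = sw_sum t (\<lambda>a b. S (g a b))"
  by (rule sw_sum_hom) auto

lemma sc_sw_sum [simp]: "sc c (sw_sum t g) = sw_sum t (\<lambda>a b. sc c (g a b))"
  by (rule sw_sum_hom) (auto simp: sc_add_right)

lemma sc_sw_sum_left [simp]: "sc (sw_sum t f) x = sw_sum t (\<lambda>a b. sc (f a b) x)"
  by (rule sw_sum_hom[where g = "\<lambda>c. sc c x"]) (auto simp: sc_add_left)

lemma S_inj: "S x = S y \<Longrightarrow> x = y"
  using bij_S by (metis bij_def injD)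

lemma S_inv_S [simp]: "S (inv S x) = x"
  using bij_S by (simp add: bij_def surj_f_inv_f)

lemma inv_S_S [simp]: "inv S (S x) = x"
  using bij_S by (simp add: bij_def inv_f_f)

lemma inv_S_eq_iff: "inv S x = y \<longleftrightarrow> x = S y"
  by (metis S_inv_S inv_S_S)

lemma inv_S_add [simp]: "inv S (x + y) = inv S x + inv S y"
  and inv_S_scale [simp]: "inv S (sc c x) = sc c (inv S x)"
  and inv_S_zero [simp]: "inv S 0 = 0"
  by (rule S_inj; simp)+

lemma inv_S_sw_sum [simp]: "inv S (sw_sum t g) = sw_sum t (\<lambda>a b. inv S (g a b))"
  by (rule sw_sum_hom) auto

lemma linear_map_id: "linear_map (\<lambda>x. x)"
  and linear_map_mult_right: "linear_map g \<Longrightarrow> linear_map (\<lambda>x. g x * c)"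
  and linear_map_mult_left: "linear_map g \<Longrightarrow> linear_map (\<lambda>x. c * g x)"
  and linear_map_S: "linear_map g \<Longrightarrow> linear_map (\<lambda>x. S (g x))"
  and linear_map_inv_S: "linear_map g \<Longrightarrow> linear_map (\<lambda>x. inv S (g x))"
  and linear_map_scale: "linear_map g \<Longrightarrow> linear_map (\<lambda>x. sc k (g x))"
  and linear_map_scale_lin: "lin sc f \<Longrightarrow> linear_map g \<Longrightarrow> linear_map (\<lambda>x. sc (f (g x)) c)"
  and lin_linear_map: "lin sc f \<Longrightarrow> linear_map g \<Longrightarrow> lin sc (\<lambda>x. f (g x))"
  by (simp_all add: linear_map_def lin_def distrib_left distrib_right sc_add_right sc_add_left
      mult.commute)

lemma linear_map_sw_sum: "(\<And>a b. linear_map (\<lambda>x. F x a b)) \<Longrightarrow> linear_map (\<lambda>x. sw_sum t (F x))"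
  unfolding linear_map_def by (auto simp: sw_sum_add[symmetric] intro!: sw_sum_cong)

lemmas linear_map_intros = linear_map_id linear_map_mult_right linear_map_mult_left
  linear_map_S linear_map_inv_S linear_map_sw_sum linear_map_scale linear_map_scale_lin
  lin_linear_map lin_Phi lin_eps lin_coord

lemma Delta_mult:
  assumes "bilinear_map \<beta>"
  shows "sw_sum (\<Delta> (h * k)) \<beta> = sw_sum (\<Delta> h) (\<lambda>a b. sw_sum (\<Delta> k) (\<lambda>c d. \<beta> (a * c) (b * d)))"
  using sw_sum_teq_bilinear_map[OF teq_Delta_mult assms] by (simp add: sw_sum_concat_map)

lemma Delta_one: "bilinear_map \<beta> \<Longrightarrow> sw_sum (\<Delta> 1) \<beta> = \<beta> 1 1"
  using sw_sum_teq_bilinear_map[OF teq_Delta_one] by simp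

lemma linear_map_Delta:
  assumes "bilinear_map \<beta>"
  shows "linear_map (\<lambda>z. sw_sum (\<Delta> z) \<beta>)"
proof -
  have "sw_sum (\<Delta> (sc c h)) \<beta> = sw_sum (map (\<lambda>(a, b). (sc c a, b)) (\<Delta> h)) \<beta>" for c h
    by (rule sw_sum_teq_bilinear_map[OF teq_Delta_scale assms])
  moreover have "sw_sum (\<Delta> h) (\<lambda>a b. \<beta> (sc c a) b) = sc c (sw_sum (\<Delta> h) \<beta>)" for c h
    using assms by (simp add: bilinear_map_def linear_map_def)
  ultimately show ?thesis
    unfolding linear_map_def using sw_sum_teq_bilinear_map[OF teq_Delta_add assms]
    by (simp add: sw_sum_map)
qed

lemma coassoc_trilinear_fun:
  assumes "trilinear_fun \<gamma>"
  shows "sw_sum (\<Delta> h) (\<lambda>a b. sw_sum (\<Delta> a) (\<lambda>c d. \<gamma> c d b))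
    = sw_sum (\<Delta> h) (\<lambda>a b. sw_sum (\<Delta> b) (\<lambda>c d. \<gamma> a c d))"
proof -
  define E where "E = list_coord_supp (\<Delta> h)
    \<union> (\<Union>p\<in>set (\<Delta> h). list_coord_supp (\<Delta> (fst p)) \<union> list_coord_supp (\<Delta> (snd p)))"
  have "finite E"
    by (simp add: E_def finite_list_coord_supp)
  have supp_E: "coord_supp a \<subseteq> E" "coord_supp b \<subseteq> E"
    "(c, d) \<in> set (\<Delta> a) \<union> set (\<Delta> b) \<Longrightarrow> coord_supp c \<subseteq> E \<and> coord_supp d \<subseteq> E"
    if "(a, b) \<in> set (\<Delta> h)" for a b c d
    using that unfolding E_def list_coord_supp_def by force+
  note expand = trilinear_fun_sum_coord[OF assms \<open>finite E\<close>]
  have "sw_sum (\<Delta> h) (\<lambda>a b. sw_sum (\<Delta> a) (\<lambda>c d. \<gamma> c d b))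
    = sw_sum (\<Delta> h) (\<lambda>a b. sw_sum (\<Delta> a) (\<lambda>c d.
        \<Sum>e1\<in>E. \<Sum>e2\<in>E. \<Sum>e3\<in>E. (coord e1 c * coord e2 d * coord e3 b) * \<gamma> e1 e2 e3))"
    by (intro sw_sum_cong expand) (blast dest: supp_E)+
  also have "\<dots> = (\<Sum>e1\<in>E. \<Sum>e2\<in>E. \<Sum>e3\<in>E. sw_sum (\<Delta> h) (\<lambda>a b. sw_sum (\<Delta> a)
         (\<lambda>c d. coord e1 c * coord e2 d) * coord e3 b) * \<gamma> e1 e2 e3)"
    by (simp add: sw_sum_sum sw_sum_mult_right)
  also have "\<dots> = (\<Sum>e1\<in>E. \<Sum>e2\<in>E. \<Sum>e3\<in>E. sw_sum (\<Delta> h) (\<lambda>a b. coord e1 a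
         * sw_sum (\<Delta> b) (\<lambda>c d. coord e2 c * coord e3 d)) * \<gamma> e1 e2 e3)"
    by (simp add: coassoc_lin lin_coord)
  also have "\<dots> = sw_sum (\<Delta> h) (\<lambda>a b. sw_sum (\<Delta> b) (\<lambda>c d.
        \<Sum>e1\<in>E. \<Sum>e2\<in>E. \<Sum>e3\<in>E. (coord e1 a * coord e2 c * coord e3 d) * \<gamma> e1 e2 e3))"
    by (simp add: sw_sum_sum sw_sum_mult_right sw_sum_mult_left mult.assoc)
  also have "\<dots> = sw_sum (\<Delta> h) (\<lambda>a b. sw_sum (\<Delta> b) (\<lambda>c d. \<gamma> a c d))"
    by (intro sw_sum_cong expand[symmetric]) (blast dest: supp_E)+
  finally show ?thesis .
qed

lemma coassoc:
  assumes "trilinear_map \<gamma>"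
  shows "sw_sum (\<Delta> h) (\<lambda>a b. sw_sum (\<Delta> a) (\<lambda>c d. \<gamma> c d b))
    = sw_sum (\<Delta> h) (\<lambda>a b. sw_sum (\<Delta> b) (\<lambda>c d. \<gamma> a c d))"
proof (rule eq_if_coord_eq)
  fix e
  show "coord e (sw_sum (\<Delta> h) (\<lambda>a b. sw_sum (\<Delta> a) (\<lambda>c d. \<gamma> c d b)))
    = coord e (sw_sum (\<Delta> h) (\<lambda>a b. sw_sum (\<Delta> b) (\<lambda>c d. \<gamma> a c d)))"
    using coassoc_trilinear_fun[OF trilinear_fun_coord[OF assms, of e]]
    by (simp add: lin_sw_sum[OF lin_coord])
qed

subsection \<open>The antipode\<close>

lemma S_one [simp]: "S 1 = 1"
proof -
  have "sw_sum (\<Delta> 1) (\<lambda>a b. S a * b) = S 1 * 1"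
    by (rule Delta_one) (auto simp: bilinear_map_def intro!: linear_map_intros)
  then show ?thesis
    using antipode_left[of 1] by simp
qed

lemma inv_S_one [simp]: "inv S 1 = 1"
  by (rule S_inj) simp

lemma S_eq_sw_sum: "S h = sw_sum (\<Delta> h) (\<lambda>a b. sc (\<epsilon> a) (S b))"
  using arg_cong[OF counit_left, of S h] by simp

lemma antipode_right_nested:
  "sw_sum (\<Delta> b) (\<lambda>b1 b2. sw_sum (\<Delta> d) (\<lambda>d1 d2. b1 * d1 * (S d2 * S b2))) = sc (\<epsilon> b * \<epsilon> d) 1"
proof -
  have "sw_sum (\<Delta> d) (\<lambda>d1 d2. b1 * d1 * (S d2 * S b2)) = b1 * sw_sum (\<Delta> d) (\<lambda>d1 d2. d1 * S d2) * S b2"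
    for b1 b2
    by (simp add: sw_sum_mult_left sw_sum_mult_right mult.assoc)
  then have "sw_sum (\<Delta> b) (\<lambda>b1 b2. sw_sum (\<Delta> d) (\<lambda>d1 d2. b1 * d1 * (S d2 * S b2)))
    = sw_sum (\<Delta> b) (\<lambda>b1 b2. sc (\<epsilon> d) (b1 * S b2))"
    by (simp add: antipode_right)
  also have "\<dots> = sc (\<epsilon> d) (sw_sum (\<Delta> b) (\<lambda>b1 b2. b1 * S b2))"
    by (rule sc_sw_sum[symmetric])
  finally show ?thesis
    by (simp add: antipode_right mult.commute)
qed

text \<open>Both sides are convolution inverses of the multiplication, one from the left and one from
  the right, so they agree.\<close>

lemma S_mult: "S (x * y) = S y * S x"
proof -
  define G where "G = (\<lambda>a b1 b2 c d1 d2. S (a * c) * (b1 * d1 * (S d2 * S b2)))"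
  have "x * y = sw_sum (\<Delta> x) (\<lambda>a b. sc (\<epsilon> b) a) * sw_sum (\<Delta> y) (\<lambda>c d. sc (\<epsilon> d) c)"
    by (simp add: counit_right)
  also have "\<dots> = sw_sum (\<Delta> x) (\<lambda>a b. sw_sum (\<Delta> y) (\<lambda>c d. sc (\<epsilon> b * \<epsilon> d) (a * c)))"
    by (simp add: sw_sum_mult_left sw_sum_mult_right sw_sum_swap[of "\<Delta> y"] mult.commute)
  finally have "S (x * y)
    = sw_sum (\<Delta> x) (\<lambda>a b. sw_sum (\<Delta> y) (\<lambda>c d. S (a * c) * sc (\<epsilon> b * \<epsilon> d) 1))"
    by simp
  also have "\<dots> = sw_sum (\<Delta> x) (\<lambda>a b. sw_sum (\<Delta> y) (\<lambda>c d.
      sw_sum (\<Delta> b) (\<lambda>b1 b2. sw_sum (\<Delta> d) (\<lambda>d1 d2. G a b1 b2 c d1 d2))))"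
    unfolding G_def by (simp add: antipode_right_nested[symmetric] sw_sum_mult_left)
  also have "\<dots> = sw_sum (\<Delta> x) (\<lambda>a b. sw_sum (\<Delta> b) (\<lambda>b1 b2.
      sw_sum (\<Delta> y) (\<lambda>c d. sw_sum (\<Delta> d) (\<lambda>d1 d2. G a b1 b2 c d1 d2))))"
    by (simp add: sw_sum_swap[of "\<Delta> y"])
  also have "\<dots> = sw_sum (\<Delta> x) (\<lambda>a b. sw_sum (\<Delta> a) (\<lambda>a1 a2.
      sw_sum (\<Delta> y) (\<lambda>c d. sw_sum (\<Delta> c) (\<lambda>c1 c2. G a1 a2 b c1 c2 d))))"
    by (subst (1 2) coassoc[symmetric]) (auto simp: G_def trilinear_map_def intro!: linear_map_intros)
  also have "\<dots> = sw_sum (\<Delta> x) (\<lambda>a b. sw_sum (\<Delta> y) (\<lambda>c d.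
      sw_sum (\<Delta> (a * c)) (\<lambda>u v. S u * v) * (S d * S b)))"
  proof -
    have "sw_sum (\<Delta> (a * c)) (\<lambda>u v. S u * v)
      = sw_sum (\<Delta> a) (\<lambda>a1 a2. sw_sum (\<Delta> c) (\<lambda>c1 c2. S (a1 * c1) * (a2 * c2)))" for a c
      by (rule Delta_mult) (auto simp: bilinear_map_def intro!: linear_map_intros)
    then show ?thesis
      unfolding G_def by (simp add: sw_sum_mult_right sw_sum_swap[of "\<Delta> y"] mult.assoc)
  qed
  also have "\<dots> = sw_sum (\<Delta> y) (\<lambda>c d. sc (\<epsilon> c) (S d)) * sw_sum (\<Delta> x) (\<lambda>a b. sc (\<epsilon> a) (S b))"
    by (simp add: antipode_left sw_sum_mult_left sw_sum_mult_right sw_sum_swap[of "\<Delta> y"]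
        mult.commute)
  finally show ?thesis
    by (simp only: S_eq_sw_sum[symmetric])
qed

lemma inv_S_mult: "inv S (x * y) = inv S y * inv S x"
  by (rule S_inj) (simp add: S_mult)

lemma inv_S_antipode_left: "sw_sum (\<Delta> h) (\<lambda>a b. inv S b * a) = sc (\<epsilon> h) 1"
  by (rule S_inj) (simp add: S_mult antipode_left)

lemma inv_S_antipode_right: "sw_sum (\<Delta> h) (\<lambda>a b. b * inv S a) = sc (\<epsilon> h) 1"
  by (rule S_inj) (simp add: S_mult antipode_right)

subsection \<open>The Haar state\<close>

lemma strong_invariance_inv_S_right:
  "sw_sum (\<Delta> x) (\<lambda>p q. sc (\<Phi> (a * p)) q) = sw_sum (\<Delta> a) (\<lambda>p q. sc (\<Phi> (p * x)) (inv S q))"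
proof -
  have "sw_sum (\<Delta> a) (\<lambda>p q. sc (\<Phi> (p * x)) (inv S q))
    = sw_sum (\<Delta> a) (\<lambda>a1 a2. inv S a2 * sw_sum (\<Delta> (a1 * x)) (\<lambda>u v. sc (\<Phi> u) v))"
    by (simp add: Phi_left_invariant)
  also have "\<dots> = sw_sum (\<Delta> a) (\<lambda>a1 a2. sw_sum (\<Delta> a1) (\<lambda>c d.
      sw_sum (\<Delta> x) (\<lambda>p q. inv S a2 * sc (\<Phi> (c * p)) (d * q))))"
  proof -
    have "sw_sum (\<Delta> (a1 * x)) (\<lambda>u v. inv S a2 * sc (\<Phi> u) v)
      = sw_sum (\<Delta> a1) (\<lambda>c d. sw_sum (\<Delta> x) (\<lambda>p q. inv S a2 * sc (\<Phi> (c * p)) (d * q)))" for a1 a2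
      by (rule Delta_mult) (auto simp: bilinear_map_def intro!: linear_map_intros)
    then show ?thesis
      by (simp add: sw_sum_mult_left)
  qed
  also have "\<dots> = sw_sum (\<Delta> a) (\<lambda>a1 a2. sw_sum (\<Delta> a2) (\<lambda>c d.
      sw_sum (\<Delta> x) (\<lambda>p q. inv S d * sc (\<Phi> (a1 * p)) (c * q))))"
    by (subst coassoc) (auto simp: trilinear_map_def intro!: linear_map_intros)
  also have "\<dots> = sw_sum (\<Delta> a) (\<lambda>a1 a2.
      sw_sum (\<Delta> x) (\<lambda>p q. sc (\<Phi> (a1 * p)) (sw_sum (\<Delta> a2) (\<lambda>c d. inv S d * c) * q)))"
    by (intro sw_sum_cong, simp add: sw_sum_mult_right mult.assoc, rule sw_sum_swap)
  also have "\<dots> = sw_sum (\<Delta> x) (\<lambda>p q. sc (\<Phi> (sw_sum (\<Delta> a) (\<lambda>a1 a2. sc (\<epsilon> a2) a1) * p)) q)"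
    by (simp add: inv_S_antipode_left mult.commute sw_sum_mult_right sw_sum_swap[of "\<Delta> a"])
  finally show ?thesis
    by (simp add: counit_right)
qed

lemma strong_invariance_inv_S_left:
  "sw_sum (\<Delta> x) (\<lambda>p q. sc (\<Phi> (q * a)) p) = sw_sum (\<Delta> a) (\<lambda>p q. sc (\<Phi> (x * q)) (inv S p))"
proof -
  have "sw_sum (\<Delta> a) (\<lambda>p q. sc (\<Phi> (x * q)) (inv S p))
    = sw_sum (\<Delta> a) (\<lambda>a1 a2. sw_sum (\<Delta> (x * a2)) (\<lambda>u v. sc (\<Phi> v) u) * inv S a1)"
    by (simp add: Phi_right_invariant)
  also have "\<dots> = sw_sum (\<Delta> a) (\<lambda>a1 a2. sw_sum (\<Delta> x) (\<lambda>p q.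
      sw_sum (\<Delta> a2) (\<lambda>c d. sc (\<Phi> (q * d)) (p * c) * inv S a1)))"
  proof -
    have "sw_sum (\<Delta> (x * a2)) (\<lambda>u v. sc (\<Phi> v) u * inv S a1)
      = sw_sum (\<Delta> x) (\<lambda>p q. sw_sum (\<Delta> a2) (\<lambda>c d. sc (\<Phi> (q * d)) (p * c) * inv S a1))" for a1 a2
      by (rule Delta_mult) (auto simp: bilinear_map_def intro!: linear_map_intros)
    then show ?thesis
      by (simp add: sw_sum_mult_right)
  qed
  also have "\<dots> = sw_sum (\<Delta> a) (\<lambda>a1 a2. sw_sum (\<Delta> a2) (\<lambda>c d.
      sw_sum (\<Delta> x) (\<lambda>p q. sc (\<Phi> (q * d)) (p * c) * inv S a1)))"
    by (intro sw_sum_cong, rule sw_sum_swap)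
  also have "\<dots> = sw_sum (\<Delta> a) (\<lambda>a1 a2. sw_sum (\<Delta> a1) (\<lambda>c d.
      sw_sum (\<Delta> x) (\<lambda>p q. sc (\<Phi> (q * a2)) (p * d) * inv S c)))"
    by (subst coassoc[symmetric]) (auto simp: trilinear_map_def intro!: linear_map_intros)
  also have "\<dots> = sw_sum (\<Delta> a) (\<lambda>a1 a2.
      sw_sum (\<Delta> x) (\<lambda>p q. sc (\<Phi> (q * a2)) (p * sw_sum (\<Delta> a1) (\<lambda>c d. d * inv S c))))"
    by (intro sw_sum_cong, simp add: sw_sum_mult_left mult.assoc, rule sw_sum_swap)
  also have "\<dots> = sw_sum (\<Delta> x) (\<lambda>p q. sc (\<Phi> (q * sw_sum (\<Delta> a) (\<lambda>a1 a2. sc (\<epsilon> a1) a2))) p)"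
    by (simp add: inv_S_antipode_right mult.commute sw_sum_mult_left sw_sum_swap[of "\<Delta> a"])
  finally show ?thesis
    by (simp add: counit_left)
qed

lemma strong_invariance_S:
  "sw_sum (\<Delta> x) (\<lambda>p q. sc (\<Phi> (p * a)) q) = sw_sum (\<Delta> a) (\<lambda>p q. sc (\<Phi> (x * p)) (S q))"
proof -
  have "sw_sum (\<Delta> a) (\<lambda>p q. sc (\<Phi> (x * p)) (S q))
    = sw_sum (\<Delta> a) (\<lambda>a1 a2. sw_sum (\<Delta> (x * a1)) (\<lambda>u v. sc (\<Phi> u) v) * S a2)"
    by (simp add: Phi_left_invariant)
  also have "\<dots> = sw_sum (\<Delta> a) (\<lambda>a1 a2. sw_sum (\<Delta> x) (\<lambda>p q.
      sw_sum (\<Delta> a1) (\<lambda>c d. sc (\<Phi> (p * c)) (q * d) * S a2)))"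
  proof -
    have "sw_sum (\<Delta> (x * a1)) (\<lambda>u v. sc (\<Phi> u) v * S a2)
      = sw_sum (\<Delta> x) (\<lambda>p q. sw_sum (\<Delta> a1) (\<lambda>c d. sc (\<Phi> (p * c)) (q * d) * S a2))" for a1 a2
      by (rule Delta_mult) (auto simp: bilinear_map_def intro!: linear_map_intros)
    then show ?thesis
      by (simp add: sw_sum_mult_right)
  qed
  also have "\<dots> = sw_sum (\<Delta> a) (\<lambda>a1 a2. sw_sum (\<Delta> a1) (\<lambda>c d.
      sw_sum (\<Delta> x) (\<lambda>p q. sc (\<Phi> (p * c)) (q * d) * S a2)))"
    by (intro sw_sum_cong, rule sw_sum_swap)
  also have "\<dots> = sw_sum (\<Delta> a) (\<lambda>a1 a2. sw_sum (\<Delta> a2) (\<lambda>c d.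
      sw_sum (\<Delta> x) (\<lambda>p q. sc (\<Phi> (p * a1)) (q * c) * S d)))"
    by (subst coassoc) (auto simp: trilinear_map_def intro!: linear_map_intros)
  also have "\<dots> = sw_sum (\<Delta> a) (\<lambda>a1 a2.
      sw_sum (\<Delta> x) (\<lambda>p q. sc (\<Phi> (p * a1)) (q * sw_sum (\<Delta> a2) (\<lambda>c d. c * S d))))"
    by (intro sw_sum_cong, simp add: sw_sum_mult_left mult.assoc, rule sw_sum_swap)
  also have "\<dots> = sw_sum (\<Delta> x) (\<lambda>p q. sc (\<Phi> (p * sw_sum (\<Delta> a) (\<lambda>a1 a2. sc (\<epsilon> a2) a1))) q)"
    by (simp add: antipode_right mult.commute sw_sum_mult_left sw_sum_swap[of "\<Delta> a"])
  finally show ?thesis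
    by (simp add: counit_right)
qed

lemma Phi_nondegenerate_right:
  assumes "\<And>x. \<Phi> (a * x) = 0"
  shows "a = 0"
proof -
  have null: "sw_sum (\<Delta> a) (\<lambda>p q. sc (\<Phi> (p * x)) q) = 0" for x
  proof -
    have "sw_sum (\<Delta> a) (\<lambda>p q. sc (\<Phi> (p * x)) (inv S q)) = 0"
      using strong_invariance_inv_S_right[of x a] assms by simp
    then have "S (sw_sum (\<Delta> a) (\<lambda>p q. sc (\<Phi> (p * x)) (inv S q))) = 0"
      by simp
    then show ?thesis
      by simp
  qed
  define G where "G y z = sw_sum (\<Delta> z) (\<lambda>c d. sc (\<Phi> (y * S c)) d)" for y z
  have "bilinear_map G"
    unfolding bilinear_map_def G_def
    by (auto intro!: linear_map_intros linear_map_Delta simp: bilinear_map_def)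
  have "a = sw_sum (\<Delta> a) (\<lambda>a1 a2. sc (\<Phi> (sw_sum (\<Delta> a1) (\<lambda>c d. c * S d))) a2)"
    by (simp add: antipode_right counit_left)
  also have "\<dots> = sw_sum (\<Delta> a) (\<lambda>a1 a2. sw_sum (\<Delta> a1) (\<lambda>c d. sc (\<Phi> (c * S d)) a2))"
    by simp
  also have "\<dots> = sw_sum (\<Delta> a) G"
    unfolding G_def by (subst coassoc) (auto simp: trilinear_map_def intro!: linear_map_intros)
  also have "\<dots> = (\<Sum>e\<in>list_coord_supp (\<Delta> a). G (sw_sum (\<Delta> a) (\<lambda>p q. sc (coord e q) p)) e)"
    by (rule sw_sum_bilinear_map_snd[OF \<open>bilinear_map G\<close>])
  also have "\<dots> = 0"
  proof (intro sum.neutral ballI)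
    fix e
    have "\<Phi> (sw_sum (\<Delta> a) (\<lambda>p q. sc (coord e q) p) * y)
      = coord e (sw_sum (\<Delta> a) (\<lambda>p q. sc (\<Phi> (p * y)) q))" for y
      by (simp add: sw_sum_mult_right lin_sw_sum[OF lin_coord] mult.commute)
    then show "G (sw_sum (\<Delta> a) (\<lambda>p q. sc (coord e q) p)) e = 0"
      unfolding G_def by (simp add: null lin_zero[OF lin_coord] mult.assoc[symmetric])
  qed
  finally show ?thesis .
qed

lemma Phi_nondegenerate_left:
  assumes "\<And>x. \<Phi> (x * a) = 0"
  shows "a = 0"
proof -
  have null: "sw_sum (\<Delta> a) (\<lambda>p q. sc (\<Phi> (x * q)) p) = 0" for x
  proof -
    have "sw_sum (\<Delta> a) (\<lambda>p q. sc (\<Phi> (x * q)) (inv S p)) = 0"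
      using strong_invariance_inv_S_left[of x a] assms by simp
    then have "S (sw_sum (\<Delta> a) (\<lambda>p q. sc (\<Phi> (x * q)) (inv S p))) = 0"
      by simp
    then show ?thesis
      by simp
  qed
  define G where "G z y = sw_sum (\<Delta> z) (\<lambda>c d. sc (\<Phi> (S d * y)) c)" for z y
  have "bilinear_map G"
    unfolding bilinear_map_def G_def
    by (auto intro!: linear_map_intros linear_map_Delta simp: bilinear_map_def)
  have "a = sw_sum (\<Delta> a) (\<lambda>a1 a2. sc (\<Phi> (sw_sum (\<Delta> a2) (\<lambda>c d. S c * d))) a1)"
    by (simp add: antipode_left counit_right)
  also have "\<dots> = sw_sum (\<Delta> a) (\<lambda>a1 a2. sw_sum (\<Delta> a2) (\<lambda>c d. sc (\<Phi> (S c * d)) a1))"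
    by simp
  also have "\<dots> = sw_sum (\<Delta> a) G"
    unfolding G_def by (subst coassoc[symmetric]) (auto simp: trilinear_map_def intro!: linear_map_intros)
  also have "\<dots> = (\<Sum>e\<in>list_coord_supp (\<Delta> a). G e (sw_sum (\<Delta> a) (\<lambda>p q. sc (coord e p) q)))"
    by (rule sw_sum_bilinear_map_fst[OF \<open>bilinear_map G\<close>])
  also have "\<dots> = 0"
  proof (intro sum.neutral ballI)
    fix e
    have "\<Phi> (y * sw_sum (\<Delta> a) (\<lambda>p q. sc (coord e p) q))
      = coord e (sw_sum (\<Delta> a) (\<lambda>p q. sc (\<Phi> (y * q)) p))" for y
      by (simp add: sw_sum_mult_left lin_sw_sum[OF lin_coord] mult.commute)
    then show "G e (sw_sum (\<Delta> a) (\<lambda>p q. sc (coord e p) q)) = 0"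
      unfolding G_def by (simp add: null lin_zero[OF lin_coord] mult.assoc)
  qed
  finally show ?thesis .
qed

lemma Phi_inv_S [simp]: "\<Phi> (inv S a) = \<Phi> a"
proof -
  define W where "W = sw_sum (\<Delta> a) (\<lambda>p q. sc (\<Phi> (inv S p)) q)"
  have "\<Phi> (x * (W - sc (\<Phi> a) 1)) = 0" for x
  proof -
    have "\<Phi> (x * W) = \<Phi> (sw_sum (\<Delta> a) (\<lambda>p q. sc (\<Phi> (x * q)) (inv S p)))"
      unfolding W_def by (simp add: sw_sum_mult_left mult.commute)
    also have "\<dots> = \<Phi> (sw_sum (\<Delta> x) (\<lambda>p q. sc (\<Phi> (q * a)) p))"
      by (simp only: strong_invariance_inv_S_left)
    also have "\<dots> = \<Phi> (sw_sum (\<Delta> x) (\<lambda>p q. sc (\<Phi> p) q) * a)"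
      by (simp add: sw_sum_mult_right mult.commute)
    finally show ?thesis
      by (simp add: Phi_left_invariant right_diff_distrib)
  qed
  then have "W = sc (\<Phi> a) 1"
    using Phi_nondegenerate_left by fastforce
  then have "\<epsilon> W = \<Phi> a"
    by simp
  moreover have "\<epsilon> W = \<Phi> (inv S (sw_sum (\<Delta> a) (\<lambda>p q. sc (\<epsilon> q) p)))"
    unfolding W_def by (simp add: mult.commute)
  ultimately show ?thesis
    by (simp add: counit_right)
qed

lemma Phi_S [simp]: "\<Phi> (S a) = \<Phi> a"
  using Phi_inv_S[of "S a"] by simp

subsection \<open>Traciality\<close>

lemma Phi_cauchy_schwarz:
  assumes "\<Phi> (st y * y) = 0"
  shows "\<Phi> (st b * y) = 0"
proof (rule complex_affine_nonneg_imp_zero)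
  fix t
  have "st (b + sc t y) * (b + sc t y)
    = st b * b + sc t (st b * y) + sc (cnj t) (st y * b) + sc (t * cnj t) (st y * y)"
    by (simp add: distrib_left distrib_right add.assoc sc_add_right)
  then have "\<Phi> (st (b + sc t y) * (b + sc t y)) = \<Phi> (st b * b) + t * \<Phi> (st b * y) + cnj t * \<Phi> (st y * b)"
    using assms by simp
  then show "Im (\<Phi> (st b * b) + t * \<Phi> (st b * y) + cnj t * \<Phi> (st y * b)) = 0
    \<and> Re (\<Phi> (st b * b) + t * \<Phi> (st b * y) + cnj t * \<Phi> (st y * b)) \<ge> 0"
    using Phi_positive[of "b + sc t y"] by simp
qed

lemma Phi_modular_if_invariant:
  assumes invariant: "\<And>h. act_I \<Delta> S h \<Phi> = (\<lambda>x. \<epsilon> h * \<Phi> x)"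
  shows "\<Phi> (x * a) = \<Phi> (inv S (inv S a) * x)"
proof -
  have inv: "sw_sum (\<Delta> h) (\<lambda>a b. \<Phi> (inv S b * x * a)) = \<epsilon> h * \<Phi> x" for h x
    using fun_cong[OF invariant[of h], of x] by (simp add: act_I_def sum_list_eq_sw_sum)
  have "\<Phi> (inv S (inv S a) * x) = \<Phi> (inv S (inv S (sw_sum (\<Delta> a) (\<lambda>a1 a2. sc (\<epsilon> a1) a2))) * x)"
    by (simp only: counit_left)
  also have "\<dots> = sw_sum (\<Delta> a) (\<lambda>a1 a2. \<epsilon> a1 * \<Phi> (inv S (inv S a2) * x))"
    by (simp add: sw_sum_mult_right)
  also have "\<dots> = sw_sum (\<Delta> a) (\<lambda>a1 a2. sw_sum (\<Delta> a1) (\<lambda>c d. \<Phi> (inv S d * (inv S (inv S a2) * x) * c)))"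
    by (simp add: inv)
  also have "\<dots> = sw_sum (\<Delta> a) (\<lambda>a1 a2. sw_sum (\<Delta> a2) (\<lambda>c d. \<Phi> (inv S c * (inv S (inv S d) * x) * a1)))"
    by (rule coassoc_trilinear_fun) (auto simp: trilinear_fun_def intro!: linear_map_intros)
  also have "\<dots> = sw_sum (\<Delta> a) (\<lambda>a1 a2. \<Phi> (inv S (sw_sum (\<Delta> a2) (\<lambda>c d. inv S d * c)) * x * a1))"
    by (simp add: sw_sum_mult_right inv_S_mult mult.assoc)
  also have "\<dots> = \<Phi> (x * sw_sum (\<Delta> a) (\<lambda>a1 a2. sc (\<epsilon> a2) a1))"
    by (simp add: inv_S_antipode_left sw_sum_mult_left)
  finally show ?thesis
    by (simp add: counit_right)
qed

lemma S_S_S_S_if_modular: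
  assumes modular: "\<And>x a. \<Phi> (x * a) = \<Phi> (inv S (inv S a) * x)"
  shows "S (S (S (S y))) = y"
proof -
  have "\<Phi> (c * (y - S (S (S (S y))))) = 0" for c
  proof -
    have "\<Phi> (c * y) = \<Phi> (inv S c * S y)"
      using modular[of "inv S c" "S y"] by (simp add: inv_S_mult[symmetric])
    also have "\<dots> = \<Phi> (inv S (S (S y) * c))"
      by (simp add: inv_S_mult)
    also have "\<dots> = \<Phi> (S (S y) * c)"
      by (rule Phi_inv_S)
    also have "\<dots> = \<Phi> (c * S (S (S (S y))))"
      using modular[of c "S (S (S (S y)))"] by simp
    finally show ?thesis
      by (simp add: right_diff_distrib)
  qed
  then show ?thesis
    using Phi_nondegenerate_left[of "y - S (S (S (S y)))"] by simp
qed

text \<open>Positivity rules out the eigenvalue \<open>-1\<close> of \<open>S\<^sup>2\<close>: for \<open>S\<^sup>2 y = -y\<close> the modular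
  identity gives \<open>\<Phi>(y\<^sup>* y) = -\<Phi>(y y\<^sup>*)\<close>, two nonnegative numbers.\<close>

lemma S_S_if_modular:
  assumes modular: "\<And>x a. \<Phi> (x * a) = \<Phi> (inv S (inv S a) * x)"
  shows "S (S z) = z"
proof -
  define y where "y = z - S (S z)"
  have "S (S y) = - y"
    using S_S_S_S_if_modular[OF modular, of z] by (simp add: y_def)
  then have "S (S (- y)) = y"
    by simp
  then have "inv S (inv S y) = - y"
    by (metis inv_S_S)
  then have "\<Phi> (st y * y) = - \<Phi> (y * st y)"
    using modular[of "st y" y] by simp
  moreover have "Re (\<Phi> (y * st y)) \<ge> 0"
    using Phi_positive[of "st y"] by simp
  ultimately have "\<Phi> (st y * y) = 0"
    using Phi_positive[of y] by (simp add: complex_eq_iff)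
  then have "\<Phi> (x * y) = 0" for x
    using Phi_cauchy_schwarz[of y "st x"] by simp
  then have "y = 0"
    by (rule Phi_nondegenerate_left)
  then show ?thesis
    by (simp add: y_def)
qed

lemma Kac_if_invariant:
  assumes "\<And>h. act_I \<Delta> S h \<Phi> = (\<lambda>x. \<epsilon> h * \<Phi> x)"
  shows "Kac_type \<Phi>"
  unfolding Kac_type_def
proof (intro allI)
  fix h k
  have modular: "\<Phi> (x * a) = \<Phi> (inv S (inv S a) * x)" for x a
    using Phi_modular_if_invariant[OF assms] .
  have "inv S (inv S k) = k"
    using S_S_if_modular[OF modular] by (simp add: inv_S_eq_iff)
  then show "\<Phi> (h * k) = \<Phi> (k * h)"
    using modular[of h k] by simp
qed

lemma eq_zero_if_Phi_slices_zero:
  assumes "linear_map u" and slices: "\<And>x. sw_sum (\<Delta> a) (\<lambda>p q. sc (\<Phi> (p * x)) (u q)) = 0"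
  shows "u a = 0"
proof (rule eq_if_lin_eq)
  fix f :: "'h \<Rightarrow> complex"
  assume f: "lin sc f"
  define W where "W = sw_sum (\<Delta> a) (\<lambda>p q. sc (f (u q)) p)"
  have "\<Phi> (W * x) = f (sw_sum (\<Delta> a) (\<lambda>p q. sc (\<Phi> (p * x)) (u q)))" for x
    unfolding W_def using f by (simp add: sw_sum_mult_right lin_sw_sum lin_def mult.commute)
  then have "W = 0"
    using Phi_nondegenerate_right slices lin_zero[OF f] by simp
  then have "\<epsilon> W = 0"
    by simp
  then have "f (sw_sum (\<Delta> a) (\<lambda>p q. sc (\<epsilon> p) (u q))) = 0"
    unfolding W_def using f by (simp add: lin_sw_sum lin_def mult.commute)
  moreover have "sw_sum (\<Delta> a) (\<lambda>p q. sc (\<epsilon> p) (u q)) = u (sw_sum (\<Delta> a) (\<lambda>p q. sc (\<epsilon> p) q))"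
    using linear_map_sw_sum_scale[OF \<open>linear_map u\<close>, of "\<Delta> a" "\<lambda>p q. \<epsilon> p" "\<lambda>p q. q"]
    by simp
  ultimately show "f (u a) = f 0"
    by (simp add: counit_left lin_zero[OF f])
qed

lemma S_S_if_Kac:
  assumes "Kac_type \<Phi>"
  shows "S (S a) = a"
proof -
  have trace: "\<Phi> (u * v) = \<Phi> (v * u)" for u v
    using assms by (simp add: Kac_type_def)
  have "sw_sum (\<Delta> a) (\<lambda>p q. sc (\<Phi> (p * x)) (inv S q)) = sw_sum (\<Delta> a) (\<lambda>p q. sc (\<Phi> (p * x)) (S q))"
    for x
  proof -
    have "sw_sum (\<Delta> a) (\<lambda>p q. sc (\<Phi> (p * x)) (inv S q)) = sw_sum (\<Delta> x) (\<lambda>p q. sc (\<Phi> (a * p)) q)"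
      by (simp only: strong_invariance_inv_S_right)
    also have "\<dots> = sw_sum (\<Delta> x) (\<lambda>p q. sc (\<Phi> (p * a)) q)"
      by (simp only: trace)
    also have "\<dots> = sw_sum (\<Delta> a) (\<lambda>p q. sc (\<Phi> (x * p)) (S q))"
      by (simp only: strong_invariance_S)
    finally show ?thesis
      by (simp only: trace)
  qed
  then have "inv S a - S a = 0"
    by (intro eq_zero_if_Phi_slices_zero[where u = "\<lambda>q. inv S q - S q"])
      (simp_all add: linear_map_def V.scale_right_diff_distrib sw_sum_diff)
  then show ?thesis
    by (metis S_inv_S eq_iff_diff_eq_0)
qed

subsection \<open>Yetter-Drinfeld isomorphisms \<open>H \<cong> I\<close>\<close>

lemma act_H_one: "act_H \<Delta> S h 1 = sc (\<epsilon> h) 1"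
  unfolding act_H_def by (simp add: sum_list_eq_sw_sum inv_S_antipode_right)

lemma act_I_scale: "act_I \<Delta> S h (\<lambda>x. c * \<omega> x) = (\<lambda>x. c * act_I \<Delta> S h \<omega> x)"
  unfolding act_I_def by (simp add: sum_list_eq_sw_sum sw_sum_mult_left)

lemma conv_Phi_mult: "conv \<Delta> \<Phi> (\<lambda>h. \<Phi> (c * h)) h = \<Phi> c * \<Phi> h"
proof -
  have "conv \<Delta> \<Phi> (\<lambda>h. \<Phi> (c * h)) h = \<Phi> (c * sw_sum (\<Delta> h) (\<lambda>p q. sc (\<Phi> p) q))"
    unfolding conv_def by (simp add: sum_list_eq_sw_sum sw_sum_mult_left)
  then show ?thesis
    by (simp add: Phi_left_invariant mult.commute)
qed

lemma Phi_in_dual_I: "\<Phi> \<in> dual_I \<Phi>"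
  unfolding dual_I_def by (rule CollectI, rule exI[of _ 1]) simp

lemma conv_Phi_eq_ten2:
  assumes "dual_coaction \<Delta> \<Phi> \<delta>" "\<omega> \<in> dual_I \<Phi>"
  shows "conv \<Delta> \<Phi> \<omega> h = ten2 (\<lambda>\<chi>. \<chi> h) \<Phi> (\<delta> \<omega>)"
  using assms Phi_in_dual_I unfolding dual_coaction_def ten2_def by (simp add: mult.commute)

lemma ten2_Delta_one: "lin sc f \<Longrightarrow> lin sc g \<Longrightarrow> ten2 f g (\<Delta> 1) = f 1 * g 1"
  using sw_sum_teq_bilinear_fun[OF teq_Delta_one, of "\<lambda>a b. f a * g b"]
  by (simp add: ten2_eq_sw_sum bilinear_fun_def lin_def distrib_left distrib_right)

lemma conv_Phi_fixes_image_one: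
  assumes "dual_coaction \<Delta> \<Phi> \<delta>" "\<phi> 1 \<in> dual_I \<Phi>"
    and lin: "\<And>h. lin sc (\<lambda>a. \<phi> a h)"
    and coact: "\<And>F g. lin_dual F \<Longrightarrow> lin sc g \<Longrightarrow> ten2 F g (\<delta> (\<phi> 1)) = ten2 (\<lambda>a. F (\<phi> a)) g (\<Delta> 1)"
  shows "conv \<Delta> \<Phi> (\<phi> 1) = \<phi> 1"
proof
  fix h
  have "conv \<Delta> \<Phi> (\<phi> 1) h = ten2 (\<lambda>\<chi>. \<chi> h) \<Phi> (\<delta> (\<phi> 1))"
    by (rule conv_Phi_eq_ten2[OF assms(1,2)])
  also have "\<dots> = ten2 (\<lambda>a. \<phi> a h) \<Phi> (\<Delta> 1)"
    by (rule coact) (simp_all add: lin_dual_def lin_Phi)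
  also have "\<dots> = \<phi> 1 h"
    by (simp add: ten2_Delta_one lin lin_Phi)
  finally show "conv \<Delta> \<Phi> (\<phi> 1) h = \<phi> 1 h" .
qed

lemma Kac_if_YD_isomorphic:
  assumes dc: "dual_coaction \<Delta> \<Phi> \<delta>" and "YD_isomorphic sc \<Delta> S \<Phi> \<delta>"
  shows "Kac_type \<Phi>"
proof -
  obtain \<phi> :: "'h \<Rightarrow> ('h \<Rightarrow> complex)" where
    add: "\<And>h k. \<phi> (h + k) = (\<lambda>x. \<phi> h x + \<phi> k x)" and
    scale: "\<And>c h. \<phi> (sc c h) = (\<lambda>x. c * \<phi> h x)" and
    bij: "bij_betw \<phi> UNIV (dual_I \<Phi>)" and
    act: "\<And>h k. \<phi> (act_H \<Delta> S h k) = act_I \<Delta> S h (\<phi> k)" and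
    coact: "\<And>h F g. lin_dual F \<Longrightarrow> lin sc g \<Longrightarrow> ten2 F g (\<delta> (\<phi> h)) = ten2 (\<lambda>a. F (\<phi> a)) g (\<Delta> h)"
    using assms(2) unfolding YD_isomorphic_def by blast
  have "\<phi> 1 \<in> dual_I \<Phi>"
    using bij by (auto simp: bij_betw_def)
  then obtain c where c: "\<phi> 1 = (\<lambda>h. \<Phi> (c * h))"
    unfolding dual_I_def by blast
  have "lin sc (\<lambda>a. \<phi> a h)" for h
    by (simp add: lin_def add scale)
  then have "conv \<Delta> \<Phi> (\<phi> 1) = \<phi> 1"
    using coact by (intro conv_Phi_fixes_image_one[where \<phi> = \<phi>, OF dc \<open>\<phi> 1 \<in> dual_I \<Phi>\<close>])
  then have \<phi>_one: "\<phi> 1 = (\<lambda>x. \<Phi> c * \<Phi> x)"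
    unfolding c by (metis conv_Phi_mult)
  have "\<Phi> c \<noteq> 0"
  proof
    assume "\<Phi> c = 0"
    then have "\<phi> 1 = \<phi> 0"
      using \<phi>_one scale[of 0 0] by simp
    with bij show False
      unfolding bij_betw_def inj_on_def by (metis zero_neq_one UNIV_I)
  qed
  have "act_I \<Delta> S h \<Phi> = (\<lambda>x. \<epsilon> h * \<Phi> x)" for h
  proof -
    have "(\<lambda>x. \<Phi> c * act_I \<Delta> S h \<Phi> x) = (\<lambda>x. \<Phi> c * (\<epsilon> h * \<Phi> x))"
      using act[of h 1] by (simp add: act_H_one scale \<phi>_one act_I_scale mult.left_commute)
    with \<open>\<Phi> c \<noteq> 0\<close> show ?thesis
      by (simp add: fun_eq_iff)
  qed
  then show ?thesis
    by (rule Kac_if_invariant)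
qed

definition Phi_dual :: "'h \<Rightarrow> 'h \<Rightarrow> complex" where
  "Phi_dual a = (\<lambda>x. \<Phi> (x * S a))"

lemma Phi_dual_add: "Phi_dual (h + k) = (\<lambda>x. Phi_dual h x + Phi_dual k x)"
  by (simp add: Phi_dual_def distrib_left)

lemma Phi_dual_scale: "Phi_dual (sc c h) = (\<lambda>x. c * Phi_dual h x)"
  by (simp add: Phi_dual_def)

lemma inj_Phi_dual: "inj Phi_dual"
proof (rule injI)
  fix a b
  assume "Phi_dual a = Phi_dual b"
  then have "\<Phi> (x * (S a - S b)) = 0" for x
    by (simp add: Phi_dual_def fun_eq_iff right_diff_distrib)
  then have "S a - S b = 0"
    by (rule Phi_nondegenerate_left)
  then show "a = b"
    using S_inj by simp
qed

context
  assumes Kac: "Kac_type \<Phi>"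
begin

lemma Phi_commute: "\<Phi> (u * v) = \<Phi> (v * u)"
  using Kac by (simp add: Kac_type_def)

lemma inv_S_eq_S: "inv S a = S a"
  using S_S_if_Kac[OF Kac] by (metis inv_S_S)

lemma range_Phi_dual: "range Phi_dual = dual_I \<Phi>"
proof -
  have "Phi_dual a = (\<lambda>h. \<Phi> (S a * h))" for a
    by (simp add: Phi_dual_def fun_eq_iff Phi_commute)
  moreover have "(\<lambda>h. \<Phi> (b * h)) = Phi_dual (inv S b)" for b
    by (simp add: Phi_dual_def fun_eq_iff Phi_commute)
  ultimately show ?thesis
    unfolding dual_I_def by blast
qed

lemma Phi_dual_act: "Phi_dual (act_H \<Delta> S h k) = act_I \<Delta> S h (Phi_dual k)"
proof
  fix x
  have "Phi_dual (act_H \<Delta> S h k) x = sw_sum (\<Delta> h) (\<lambda>a b. \<Phi> (x * (a * (S k * S b))))"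
    unfolding Phi_dual_def act_H_def by (simp add: sum_list_eq_sw_sum S_mult sw_sum_mult_left)
  also have "\<dots> = sw_sum (\<Delta> h) (\<lambda>a b. \<Phi> (inv S b * x * a * S k))"
  proof (intro sw_sum_cong)
    fix a b
    have "\<Phi> (inv S b * x * a * S k) = \<Phi> ((x * a * S k) * inv S b)"
      by (simp add: Phi_commute[of "inv S b"] mult.assoc)
    then show "\<Phi> (x * (a * (S k * S b))) = \<Phi> (inv S b * x * a * S k)"
      by (simp add: inv_S_eq_S mult.assoc)
  qed
  also have "\<dots> = act_I \<Delta> S h (Phi_dual k) x"
    unfolding act_I_def Phi_dual_def by (simp add: sum_list_eq_sw_sum)
  finally show "Phi_dual (act_H \<Delta> S h k) x = act_I \<Delta> S h (Phi_dual k) x" .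
qed

lemma conv_Phi_dual:
  "conv \<Delta> (\<lambda>z. \<Phi> (c * z)) (Phi_dual h) y = sw_sum (\<Delta> h) (\<lambda>p q. \<Phi> (c * q) * Phi_dual p y)"
proof -
  have "conv \<Delta> (\<lambda>z. \<Phi> (c * z)) (Phi_dual h) y = \<Phi> (S h * sw_sum (\<Delta> y) (\<lambda>p q. sc (\<Phi> (c * p)) q))"
    unfolding conv_def Phi_dual_def
    by (simp add: sum_list_eq_sw_sum sw_sum_mult_left Phi_commute[of _ "S h"])
  also have "\<dots> = \<Phi> (S h * sw_sum (\<Delta> c) (\<lambda>p q. sc (\<Phi> (p * y)) (inv S q)))"
    by (simp only: strong_invariance_inv_S_right)
  also have "\<dots> = sw_sum (\<Delta> c) (\<lambda>p q. \<Phi> (p * y) * \<Phi> (q * h))"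
    by (simp add: sw_sum_mult_left inv_S_eq_S S_mult[symmetric])
  also have "\<dots> = sw_sum (\<Delta> c) (\<lambda>p q. \<Phi> (h * q) * \<Phi> (y * p))"
    by (simp add: Phi_commute[of _ h] Phi_commute[of _ y] mult.commute)
  also have "\<dots> = \<Phi> (y * S (sw_sum (\<Delta> c) (\<lambda>p q. sc (\<Phi> (h * q)) (inv S p))))"
    by (simp add: sw_sum_mult_left)
  also have "\<dots> = \<Phi> (y * S (sw_sum (\<Delta> h) (\<lambda>p q. sc (\<Phi> (q * c)) p)))"
    by (simp only: strong_invariance_inv_S_left)
  also have "\<dots> = sw_sum (\<Delta> h) (\<lambda>p q. \<Phi> (c * q) * Phi_dual p y)"
    unfolding Phi_dual_def by (simp add: sw_sum_mult_left Phi_commute[of c])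
  finally show ?thesis .
qed

lemma Phi_dual_coaction:
  assumes dc: "dual_coaction \<Delta> \<Phi> \<delta>" and F: "lin_dual F" and g: "lin sc g"
  shows "ten2 F g (\<delta> (Phi_dual h)) = ten2 (\<lambda>a. F (Phi_dual a)) g (\<Delta> h)"
proof -
  define w\<delta> where "w\<delta> = sw_sum (\<delta> (Phi_dual h)) (\<lambda>\<omega> k. sc (F \<omega>) k)"
  define w\<Delta> where "w\<Delta> = sw_sum (\<Delta> h) (\<lambda>p q. sc (F (Phi_dual p)) q)"
  have "\<Phi> (c * w\<delta>) = \<Phi> (c * w\<Delta>)" for c
  proof -
    have "conv \<Delta> (\<lambda>z. \<Phi> (c * z)) (Phi_dual h) y = sw_sum (\<delta> (Phi_dual h)) (\<lambda>\<omega> k. \<Phi> (c * k) * \<omega> y)"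
      for y
      using dc range_Phi_dual unfolding dual_coaction_def dual_I_def sw_sum_def by blast
    then have "F (\<lambda>y. sw_sum (\<delta> (Phi_dual h)) (\<lambda>\<omega> k. \<Phi> (c * k) * \<omega> y))
      = F (\<lambda>y. sw_sum (\<Delta> h) (\<lambda>p q. \<Phi> (c * q) * Phi_dual p y))"
      by (simp add: conv_Phi_dual)
    then have "sw_sum (\<delta> (Phi_dual h)) (\<lambda>\<omega> k. \<Phi> (c * k) * F \<omega>)
      = sw_sum (\<Delta> h) (\<lambda>p q. \<Phi> (c * q) * F (Phi_dual p))"
      by (simp only: lin_dual_sw_sum[OF F])
    then show ?thesis
      unfolding w\<delta>_def w\<Delta>_def by (simp add: sw_sum_mult_left mult.commute)
  qed
  then have "w\<delta> = w\<Delta>"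
    using Phi_nondegenerate_left[of "w\<delta> - w\<Delta>"] by (simp add: right_diff_distrib)
  then have "g w\<delta> = g w\<Delta>"
    by simp
  then show ?thesis
    unfolding w\<delta>_def w\<Delta>_def ten2_eq_sw_sum using g by (simp add: lin_sw_sum lin_def)
qed

lemma YD_isomorphic_if_Kac:
  assumes "dual_coaction \<Delta> \<Phi> \<delta>"
  shows "YD_isomorphic sc \<Delta> S \<Phi> \<delta>"
  unfolding YD_isomorphic_def bij_betw_def
  using Phi_dual_add Phi_dual_scale inj_Phi_dual range_Phi_dual Phi_dual_act
    Phi_dual_coaction[OF assms]
  by blast

end

end

theorem mainTheorem8:
  fixes sc :: "complex \<Rightarrow> 'h::ring_1 \<Rightarrow> 'h"
    and \<Delta> :: "'h \<Rightarrow> ('h \<times> 'h) list"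
    and \<epsilon> :: "'h \<Rightarrow> complex"
    and S st :: "'h \<Rightarrow> 'h"
    and \<Phi> :: "'h \<Rightarrow> complex"
    and \<delta> :: "('h \<Rightarrow> complex) \<Rightarrow> (('h \<Rightarrow> complex) \<times> 'h) list"
  assumes "CQG_Hopf_star_algebra sc \<Delta> \<epsilon> S st \<Phi>"
    and "dual_coaction \<Delta> \<Phi> \<delta>"
  shows "YD_isomorphic sc \<Delta> S \<Phi> \<delta> \<longleftrightarrow> Kac_type \<Phi>"
proof -
  interpret cqg_hopf sc \<Delta> \<epsilon> S st \<Phi>
    by (rule cqg_hopf.intro) (rule assms(1))
  show ?thesis
    using Kac_if_YD_isomorphic[OF assms(2)] YD_isomorphic_if_Kac[OF _ assms(2)] by blast
qed

end
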